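(* Fix $p^s\in\mathbb{R}$ and let $$\mathcal{E}=\{(z,p^d,p^c)\in\mathbb{R}^3:\ p^d\ge0,\ p^c\ge0,\ p^dp^c=0,\ z\ge(p^d)^2+(p^c)^2-2p^dp^s+2p^cp^s+(p^s)^2\}.$$ Then $$\mathrm{conv}(\mathcal{E})=\{(z,p^d,p^c)\in\mathbb{R}^3:\ p^d\ge0,\ p^c\ge0,\ z\ge(p^d+p^c)^2-2p^dp^s+2p^cp^s+(p^s)^2\}.$$ Equivalently, writing $x=(p^d,p^c,z)^\top$, $A=\begin{pmatrix}1&1&0\\0&0&0\\0&0&0\end{pmatrix}$, $b=(-2p^s,\,2p^s,\,-1)^\top$, $c=(p^s)^2$, the convex hull is the set of $(z,p^d,p^c)$ with $p^d,p^c\ge0$ and the second-order cone constraint $$\left\|\begin{pmatrix}\tfrac12 b^\top x+\tfrac{1+c}{2}\\ Ax\end{pmatrix}\right\|_2\le\tfrac12\left(1-b^\top x-c\right).$$ *)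

theory Defs
  imports "HOL-Analysis.Analysis"
begin

end

theory Submission
  imports Defs
begin

text \<open>
  Along each segment \<open>d + c = t\<close>, \<open>d, c \<ge> 0\<close>, the function \<open>\<phi> (d + c) + \<alpha> d + \<beta> c\<close>
  is affine, so a point \<open>(z, d, c)\<close> above its graph is the convex combination, with weights
  \<open>d / t\<close> and \<open>c / t\<close>, of the endpoints \<open>(t, 0)\<close> and \<open>(0, t)\<close> lifted by the same slack;
  both endpoints satisfy the complementarity condition \<open>d c = 0\<close>. The epigraph over the whole
  quadrant is convex when \<open>\<phi>\<close> is, hence it is the convex hull. The theorem is the case
  \<open>\<phi> t = t\<^sup>2 + ps\<^sup>2\<close>, \<open>\<alpha> = -2 ps\<close>, \<open>\<beta> = 2 ps\<close>, because \<open>d\<^sup>2 + c\<^sup>2 = (d + c)\<^sup>2\<close> when \<open>d c = 0\<close>.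
\<close>

definition quadrant_epigraph ::
    "(real \<Rightarrow> real) \<Rightarrow> real \<Rightarrow> real \<Rightarrow> (real \<times> real \<times> real) set" where
  "quadrant_epigraph \<phi> \<alpha> \<beta> =
     {(z, d, c). d \<ge> 0 \<and> c \<ge> 0 \<and> z \<ge> \<phi> (d + c) + \<alpha> * d + \<beta> * c}"

definition complementary_epigraph ::
    "(real \<Rightarrow> real) \<Rightarrow> real \<Rightarrow> real \<Rightarrow> (real \<times> real \<times> real) set" where
  "complementary_epigraph \<phi> \<alpha> \<beta> = {(z, d, c) \<in> quadrant_epigraph \<phi> \<alpha> \<beta>. d * c = 0}"

lemma convex_quadrant_epigraph:
  assumes "convex_on {0..} \<phi>"
  shows "convex (quadrant_epigraph \<phi> \<alpha> \<beta>)"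
proof (rule convexI)
  fix x y :: "real \<times> real \<times> real" and u v :: real
  assume "x \<in> quadrant_epigraph \<phi> \<alpha> \<beta>" "y \<in> quadrant_epigraph \<phi> \<alpha> \<beta>"
    and uv: "0 \<le> u" "0 \<le> v" "u + v = 1"
  then obtain z1 d1 c1 z2 d2 c2 where xy: "x = (z1, d1, c1)" "y = (z2, d2, c2)"
    and nonneg: "d1 \<ge> 0" "c1 \<ge> 0" "d2 \<ge> 0" "c2 \<ge> 0"
    and above: "z1 \<ge> \<phi> (d1 + c1) + \<alpha> * d1 + \<beta> * c1" "z2 \<ge> \<phi> (d2 + c2) + \<alpha> * d2 + \<beta> * c2"
    by (auto simp: quadrant_epigraph_def)
  have "\<phi> (u * (d1 + c1) + v * (d2 + c2)) \<le> u * \<phi> (d1 + c1) + v * \<phi> (d2 + c2)"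
    using assms nonneg uv by (auto simp: convex_on_def)
  moreover have "u * (d1 + c1) + v * (d2 + c2) = (u * d1 + v * d2) + (u * c1 + v * c2)"
    by (simp add: algebra_simps)
  moreover have "u * z1 + v * z2 \<ge>
      u * (\<phi> (d1 + c1) + \<alpha> * d1 + \<beta> * c1) + v * (\<phi> (d2 + c2) + \<alpha> * d2 + \<beta> * c2)"
    using above uv by (intro add_mono mult_left_mono)
  ultimately have "u * z1 + v * z2 \<ge>
      \<phi> ((u * d1 + v * d2) + (u * c1 + v * c2)) + \<alpha> * (u * d1 + v * d2) + \<beta> * (u * c1 + v * c2)"
    by (simp add: algebra_simps)
  then show "u *\<^sub>R x + v *\<^sub>R y \<in> quadrant_epigraph \<phi> \<alpha> \<beta>"
    using xy nonneg uv by (simp add: quadrant_epigraph_def)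
qed

lemma quadrant_epigraph_subset_convex_hull:
  "quadrant_epigraph \<phi> \<alpha> \<beta> \<subseteq> convex hull (complementary_epigraph \<phi> \<alpha> \<beta>)"
proof (clarsimp simp: quadrant_epigraph_def)
  fix z d c :: real
  assume nonneg: "d \<ge> 0" "c \<ge> 0" and above: "z \<ge> \<phi> (d + c) + \<alpha> * d + \<beta> * c"
  let ?E = "complementary_epigraph \<phi> \<alpha> \<beta>"
  define t where "t = d + c"
  define e where "e = z - (\<phi> t + \<alpha> * d + \<beta> * c)"
  show "(z, d, c) \<in> convex hull ?E"
  proof (cases "t = 0")
    case True
    then have "(z, d, c) \<in> ?E"
      using nonneg above by (simp add: t_def complementary_epigraph_def quadrant_epigraph_def)
    then show ?thesis by (rule hull_inc)
  next
    case False
    then have t: "t > 0" using nonneg by (simp add: t_def)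
    have "e \<ge> 0" using above by (simp add: e_def t_def)
    have weights: "d / t + c / t = 1"
      using t by (simp add: t_def flip: add_divide_distrib)
    have "(\<phi> t + \<alpha> * t + e, t, 0) \<in> ?E" "(\<phi> t + \<beta> * t + e, 0, t) \<in> ?E"
      using t \<open>e \<ge> 0\<close> by (simp_all add: complementary_epigraph_def quadrant_epigraph_def)
    then have "(d / t) *\<^sub>R (\<phi> t + \<alpha> * t + e, t, 0) + (c / t) *\<^sub>R (\<phi> t + \<beta> * t + e, 0, t)
        \<in> convex hull ?E"
      using t nonneg weights by (intro convexD convex_convex_hull hull_inc) simp_all
    moreover have "(d / t) *\<^sub>R (\<phi> t + \<alpha> * t + e, t, 0) + (c / t) *\<^sub>R (\<phi> t + \<beta> * t + e, 0, t)
        = (z, d, c)"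
    proof -
      have "(d / t) * (\<phi> t + \<alpha> * t + e) + (c / t) * (\<phi> t + \<beta> * t + e)
          = (d / t + c / t) * (\<phi> t + e) + \<alpha> * (d / t * t) + \<beta> * (c / t * t)"
        by (simp add: algebra_simps)
      then show ?thesis using t weights by (simp add: e_def)
    qed
    ultimately show ?thesis by simp
  qed
qed

theorem convex_hull_complementary_epigraph:
  assumes "convex_on {0..} \<phi>"
  shows "convex hull (complementary_epigraph \<phi> \<alpha> \<beta>) = quadrant_epigraph \<phi> \<alpha> \<beta>"
proof
  show "convex hull (complementary_epigraph \<phi> \<alpha> \<beta>) \<subseteq> quadrant_epigraph \<phi> \<alpha> \<beta>"
    using assms by (intro hull_minimal convex_quadrant_epigraph)
      (auto simp: complementary_epigraph_def)
qed (rule quadrant_epigraph_subset_convex_hull)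

theorem theorem2:
  fixes ps :: real
  shows "convex hull {(z :: real, pd :: real, pc :: real).
            pd \<ge> 0 \<and> pc \<ge> 0 \<and> pd * pc = 0 \<and>
            z \<ge> pd\<^sup>2 + pc\<^sup>2 - 2 * pd * ps + 2 * pc * ps + ps\<^sup>2}
       = {(z :: real, pd :: real, pc :: real).
            pd \<ge> 0 \<and> pc \<ge> 0 \<and>
            z \<ge> (pd + pc)\<^sup>2 - 2 * pd * ps + 2 * pc * ps + ps\<^sup>2}"
proof -
  define \<phi> where "\<phi> t = t\<^sup>2 + ps\<^sup>2" for t :: real
  have "convex_on {0..} \<phi>"
    unfolding \<phi>_def
    by (intro convex_on_add convex_on_subset[OF convex_power2]) (simp_all add: convex_on_const)
  moreover have "{(z, pd, pc). pd \<ge> 0 \<and> pc \<ge> 0 \<and> pd * pc = 0 \<and>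
            z \<ge> pd\<^sup>2 + pc\<^sup>2 - 2 * pd * ps + 2 * pc * ps + ps\<^sup>2}
      = complementary_epigraph \<phi> (- 2 * ps) (2 * ps)"
    by (auto simp: complementary_epigraph_def quadrant_epigraph_def \<phi>_def power2_eq_square
        algebra_simps)
  moreover have "{(z, pd, pc). pd \<ge> 0 \<and> pc \<ge> 0 \<and>
            z \<ge> (pd + pc)\<^sup>2 - 2 * pd * ps + 2 * pc * ps + ps\<^sup>2}
      = quadrant_epigraph \<phi> (- 2 * ps) (2 * ps)"
    by (auto simp: quadrant_epigraph_def \<phi>_def algebra_simps)
  ultimately show ?thesis by (simp add: convex_hull_complementary_epigraph)
qed

end
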